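(* Let $A,B\in\mathbb{R}^{n\times n}$ be real symmetric with normalizations $\widetilde A,\widetilde B$ satisfying $\mathrm{spec}(\widetilde A),\mathrm{spec}(\widetilde B)\subset[-1,1]$, and let $\eta>0$. Then there is a constant $C_T\le2$ such that for all $k\ge0$, \[ |\mathrm{tr}\,T_k(\widetilde A)-\mathrm{tr}\,T_k(\widetilde B)|\le n\,C_T\,k^2\,\|\widetilde A-\widetilde B\|_2, \] and for any $K\ge1$, \[ \|\phi_K(A)-\phi_K(B)\|_2\le\frac{n}{\|[s_0,\dots,s_{K-1}]\|_2}\Big(\sum_{k=0}^{K-1}e^{-2\eta k}C_T^2k^4\Big)^{1/2}\|\widetilde A-\widetilde B\|_2=\mathcal{O}\big(n\,\eta^{-5/2}\,\|\widetilde A-\widetilde B\|_2\big), \] where $s_k=s_k(A)$.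
   Context: For a real symmetric $M$, $\widetilde M=(M-mI)/r$ with $m=\tfrac12(\lambda_{\max}(M)+\lambda_{\min}(M))$, $r=(1+\varepsilon_{\mathrm{rel}})\tfrac12(\lambda_{\max}(M)-\lambda_{\min}(M))$, fixed $\varepsilon_{\mathrm{rel}}>0$. $T_k$ are Chebyshev polynomials of the first kind ($T_0=1$, $T_1(x)=x$, $T_{k+1}=2xT_k-T_{k-1}$). $s_k(M)=e^{-\eta k}\mathrm{tr}(T_k(\widetilde M))$ and $\phi_K(M)=[s_0(M),\dots,s_{K-1}(M)]/\|[s_0(M),\dots,s_{K-1}(M)]\|_2$. $\|\cdot\|_2$ denotes the spectral norm for matrices and Euclidean norm for vectors. *)

theory Defs
  imports "Jordan_Normal_Form.Matrix" "Jordan_Normal_Form.Char_Poly"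
begin

definition mtrace :: "real mat \<Rightarrow> real" where
  "mtrace M = (\<Sum>i<dim_row M. M $$ (i, i))"

definition real_sym :: "nat \<Rightarrow> real mat \<Rightarrow> bool" where
  "real_sym n M \<longleftrightarrow> M \<in> carrier_mat n n \<and> transpose_mat M = M"

definition spec :: "real mat \<Rightarrow> real set" where
  "spec M = {l. eigenvalue M l}"

definition lam_max :: "real mat \<Rightarrow> real" where
  "lam_max M = Max (spec M)"

definition lam_min :: "real mat \<Rightarrow> real" where
  "lam_min M = Min (spec M)"

definition normalize_mat :: "real \<Rightarrow> real mat \<Rightarrow> real mat" where
  "normalize_mat eps M =
     (let m = (lam_max M + lam_min M) / 2;
          r = (1 + eps) * ((lam_max M - lam_min M) / 2)
      in (1 / r) \<cdot>\<^sub>m (M - m \<cdot>\<^sub>m 1\<^sub>m (dim_row M)))"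

fun cheb_mat :: "nat \<Rightarrow> real mat \<Rightarrow> real mat" where
  "cheb_mat 0 M = 1\<^sub>m (dim_row M)"
| "cheb_mat (Suc 0) M = M"
| "cheb_mat (Suc (Suc k)) M = 2 \<cdot>\<^sub>m (M * cheb_mat (Suc k) M) - cheb_mat k M"

definition vnorm :: "real vec \<Rightarrow> real" where
  "vnorm v = sqrt (\<Sum>i<dim_vec v. (v $ i)\<^sup>2)"

definition spec_norm :: "real mat \<Rightarrow> real" where
  "spec_norm M = Sup (insert 0 {vnorm (M *\<^sub>v v) | v. v \<in> carrier_vec (dim_col M) \<and> vnorm v = 1})"

definition s_coef :: "real \<Rightarrow> real \<Rightarrow> real mat \<Rightarrow> nat \<Rightarrow> real" where
  "s_coef eta eps M k = exp (- eta * real k) * mtrace (cheb_mat k (normalize_mat eps M))"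

definition s_vec :: "real \<Rightarrow> real \<Rightarrow> nat \<Rightarrow> real mat \<Rightarrow> real vec" where
  "s_vec eta eps K M = vec K (\<lambda>k. s_coef eta eps M k)"

definition phi :: "real \<Rightarrow> real \<Rightarrow> nat \<Rightarrow> real mat \<Rightarrow> real vec" where
  "phi eta eps K M = (1 / vnorm (s_vec eta eps K M)) \<cdot>\<^sub>v s_vec eta eps K M"

end

theory Submission
  imports Defs "Jordan_Normal_Form.Spectral_Radius" "HOL-Analysis.L2_Norm"
begin

(* Diagonalize the normalized matrices X and Y in orthonormal eigenbases x_i, y_j with
   eigenvalues a_i, b_j in [-1,1]. The matrix (<x_i, y_j>^2) has all row and column sums 1, so
   tr T_k(X) - tr T_k(Y) = sum_ij <x_i, y_j>^2 (T_k(a_i) - T_k(b_j)). Since T_k(cos s) = cos (k s),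
   the product formula for cos (k s) - cos (k t) and |sin (k u)| <= k |sin u| give
   |T_k(a) - T_k(b)| <= k^2 |a - b| on [-1,1]. As (a_i - b_j) <x_i, y_j> = <x_i, (X - Y) y_j>,
   Cauchy-Schwarz over i for each fixed j bounds the sum by n k^2 ||X - Y||_2.
   For the feature map, ||u/|u| - w/|w| || <= 2 ||u - w|| / |u| (the factor 2 is the C_T = 2),
   s_0 = tr I = n gives |s(A)| >= n, and k^4 <= 256 eta^-4 e^(eta k) together with a geometric
   series starting at k = 1 gives sum_k e^(-2 eta k) k^4 <= 256 eta^-5. *)

fun cheb :: "nat \<Rightarrow> real \<Rightarrow> real" where
  "cheb 0 x = 1"
| "cheb (Suc 0) x = x"
| "cheb (Suc (Suc k)) x = 2 * x * cheb (Suc k) x - cheb k x"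

lemma cheb_cos: "cheb k (cos t) = cos (real k * t)"
proof (induction k rule: induct_nat_012)
  case (ge2 k)
  have "cos (real (Suc (Suc k)) * t) + cos (real k * t) = 2 * cos t * cos (real (Suc k) * t)"
    using cos_add[of "real (Suc k) * t" t] cos_diff[of "real (Suc k) * t" t]
    by (simp add: algebra_simps)
  with ge2 show ?case by simp
qed simp_all

lemma abs_sin_mult_le: "\<bar>sin (real k * u)\<bar> \<le> real k * \<bar>sin u\<bar>"
proof (induction k)
  case (Suc k)
  have "\<bar>sin (real (Suc k) * u)\<bar> = \<bar>sin (real k * u) * cos u + cos (real k * u) * sin u\<bar>"
    using sin_add[of "real k * u" u] by (simp add: distrib_right add.commute)
  also have "\<dots> \<le> \<bar>sin (real k * u)\<bar> * \<bar>cos u\<bar> + \<bar>cos (real k * u)\<bar> * \<bar>sin u\<bar>"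
    by (metis abs_mult abs_triangle_ineq)
  also have "\<dots> \<le> \<bar>sin (real k * u)\<bar> + \<bar>sin u\<bar>"
    by (intro add_mono mult_left_le mult_left_le_one_le) auto
  finally show ?case using Suc by (simp add: algebra_simps)
qed simp

lemma cheb_lipschitz:
  assumes "a \<in> {-1..1}" "b \<in> {-1..1}"
  shows "\<bar>cheb k a - cheb k b\<bar> \<le> (real k)\<^sup>2 * \<bar>a - b\<bar>"
proof -
  define u where "u = (arccos a + arccos b) / 2"
  define v where "v = (arccos b - arccos a) / 2"
  have a: "a = cos (u - v)" and b: "b = cos (u + v)"
    using assms by (simp_all add: u_def v_def cos_arccos field_simps)
  have "\<bar>cheb k a - cheb k b\<bar> = 2 * \<bar>sin (real k * u)\<bar> * \<bar>sin (real k * v)\<bar>"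
    by (simp add: a b cheb_cos cos_diff_cos abs_mult algebra_simps)
  also have "\<dots> \<le> 2 * (real k * \<bar>sin u\<bar>) * (real k * \<bar>sin v\<bar>)"
    by (intro mult_mono mult_left_mono abs_sin_mult_le) auto
  also have "\<dots> = (real k)\<^sup>2 * \<bar>a - b\<bar>"
    by (simp add: a b cos_diff_cos abs_mult power2_eq_square algebra_simps)
  finally show ?thesis .
qed

(* The library's orthogonal_mat only asks for pairwise orthogonal columns. *)
definition orthonormal_mat :: "nat \<Rightarrow> 'a::comm_ring_1 mat \<Rightarrow> bool" where
  "orthonormal_mat n Q \<longleftrightarrow> Q \<in> carrier_mat n n \<and> transpose_mat Q * Q = 1\<^sub>m n"

lemma orthonormal_mat_right_inverse:
  fixes Q :: "'a::field mat"
  assumes "orthonormal_mat n Q"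
  shows "Q * transpose_mat Q = 1\<^sub>m n"
  using assms mat_mult_left_right_inverse[of "transpose_mat Q" n Q]
  by (auto simp: orthonormal_mat_def)

lemma orthonormal_mat_col_scalar_prod:
  assumes "orthonormal_mat n Q" "i < n" "j < n"
  shows "col Q i \<bullet> col Q j = (if i = j then 1 else 0)"
proof -
  have Q: "Q \<in> carrier_mat n n" and QQ: "transpose_mat Q * Q = 1\<^sub>m n"
    using assms(1) by (auto simp: orthonormal_mat_def)
  have "col Q i \<bullet> col Q j = (transpose_mat Q * Q) $$ (i, j)"
    using Q assms(2,3) by simp
  with QQ assms(2,3) show ?thesis by simp
qed

lemma orthonormal_mat_mult:
  assumes P: "orthonormal_mat n P" and Q: "orthonormal_mat n Q"
  shows "orthonormal_mat n (P * Q)"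
proof -
  have Pc: "P \<in> carrier_mat n n" and Qc: "Q \<in> carrier_mat n n"
    using P Q by (auto simp: orthonormal_mat_def)
  have "transpose_mat (P * Q) * (P * Q) = transpose_mat Q * ((transpose_mat P * P) * Q)"
    using Pc Qc by (simp add: transpose_mult[OF Pc Qc] assoc_mult_mat[of _ n n _ n _ n])
  also have "\<dots> = 1\<^sub>m n" using P Q Qc by (simp add: orthonormal_mat_def)
  finally show ?thesis using Pc Qc by (simp add: orthonormal_mat_def)
qed

lemma orthonormal_mat_four_block:
  assumes "orthonormal_mat m Q"
  shows "orthonormal_mat (Suc m) (four_block_mat (1\<^sub>m 1) (0\<^sub>m 1 m) (0\<^sub>m m 1) Q)"
proof -
  have Q: "Q \<in> carrier_mat m m" and QQ: "transpose_mat Q * Q = 1\<^sub>m m"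
    using assms by (auto simp: orthonormal_mat_def)
  have "transpose_mat (four_block_mat (1\<^sub>m 1) (0\<^sub>m 1 m) (0\<^sub>m m 1) Q)
      = four_block_mat (1\<^sub>m 1) (0\<^sub>m 1 m) (0\<^sub>m m 1) (transpose_mat Q)"
    using transpose_four_block_mat[of "1\<^sub>m 1" 1 1 "0\<^sub>m 1 m" m "0\<^sub>m m 1" m Q] Q by simp
  moreover have "four_block_mat (1\<^sub>m 1) (0\<^sub>m 1 m) (0\<^sub>m m 1) (transpose_mat Q)
      * four_block_mat (1\<^sub>m 1) (0\<^sub>m 1 m) (0\<^sub>m m 1) Q = 1\<^sub>m (Suc m)"
    using Q QQ by (subst mult_four_block_mat[of _ 1 1 _ m _ m]) auto
  ultimately show ?thesis
    using Q four_block_carrier_mat[of "1\<^sub>m 1" 1 1 Q m m] by (simp add: orthonormal_mat_def)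
qed

definition householder_mat :: "nat \<Rightarrow> 'a::field vec \<Rightarrow> 'a mat" where
  "householder_mat n w = mat n n (\<lambda>(i, j). (if i = j then 1 else 0) - 2 / (w \<bullet> w) * w $ i * w $ j)"

lemma householder_mat_orthonormal:
  assumes w: "w \<in> carrier_vec n" and ww: "w \<bullet> w \<noteq> 0"
  shows "orthonormal_mat n (householder_mat n w)"
proof -
  define c where "c = 2 / (w \<bullet> w)"
  have cw: "c * (w \<bullet> w) = 2" using ww by (simp add: c_def)
  have "transpose_mat (householder_mat n w) * householder_mat n w = 1\<^sub>m n"
  proof (rule eq_matI)
    fix i j assume ij: "i < dim_row (1\<^sub>m n)" "j < dim_col (1\<^sub>m n)"
    have "(transpose_mat (householder_mat n w) * householder_mat n w) $$ (i, j)
        = (\<Sum>k<n. ((if k = i then 1 else 0) - c * w $ k * w $ i) * ((if k = j then 1 else 0) - c * w $ k * w $ j))"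
      using ij by (simp add: householder_mat_def c_def scalar_prod_def atLeast0LessThan)
    also have "\<dots> = (\<Sum>k<n. (if k = i then (if i = j then 1 else 0) - c * w $ i * w $ j else 0)
        - (if k = j then c * w $ i * w $ j else 0) + c * c * w $ i * w $ j * (w $ k * w $ k))"
      by (intro sum.cong) (auto simp: algebra_simps)
    also have "\<dots> = (if i = j then 1 else 0) - 2 * c * w $ i * w $ j + c * c * w $ i * w $ j * (w \<bullet> w)"
      using ij w by (simp add: sum.distrib sum_subtractf scalar_prod_def atLeast0LessThan
          flip: sum_distrib_left)
    also have "\<dots> = 1\<^sub>m n $$ (i, j)" using ij cw by (simp add: algebra_simps)
    finally show "(transpose_mat (householder_mat n w) * householder_mat n w) $$ (i, j) = 1\<^sub>m n $$ (i, j)" .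
  qed (simp_all add: householder_mat_def)
  then show ?thesis by (simp add: orthonormal_mat_def householder_mat_def)
qed

text \<open>The Householder reflection along \<open>w = v - e\<^sub>0\<close> exchanges \<open>e\<^sub>0\<close> and \<open>v\<close>.\<close>
lemma orthonormal_mat_with_first_col:
  fixes v :: "real vec"
  assumes v: "v \<in> carrier_vec n" and vv: "v \<bullet> v = 1" and n: "0 < n"
  shows "\<exists>H. orthonormal_mat n H \<and> col H 0 = v"
proof -
  define w where "w = v - unit_vec n 0"
  have w: "w \<in> carrier_vec n" using v by (simp add: w_def)
  have ww: "w \<bullet> w = 2 - 2 * v $ 0"
    using v vv n by (simp add: w_def scalar_prod_minus_distrib minus_scalar_prod_distrib
        comm_scalar_prod[of v n "unit_vec n 0"])
  show ?thesis
  proof (cases "w \<bullet> w = 0")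
    case True
    then have "w = 0\<^sub>v n" using conjugate_square_eq_0_vec[OF w] by simp
    have "v $ i = unit_vec n 0 $ i" if "i < n" for i
    proof -
      have "w $ i = 0" using \<open>w = 0\<^sub>v n\<close> that by simp
      then show ?thesis using that v unfolding w_def by simp
    qed
    then have "col (1\<^sub>m n) 0 = v"
      using v by (intro eq_vecI) auto
    then show ?thesis by (intro exI[of _ "1\<^sub>m n"]) (simp add: orthonormal_mat_def)
  next
    case False
    moreover have "col (householder_mat n w) 0 = v"
    proof (rule eq_vecI)
      have w0: "w $ 0 = v $ 0 - 1" using v n by (simp add: w_def)
      have c: "2 / (w \<bullet> w) * w $ 0 = -1" using False unfolding ww w0 by (simp add: field_simps)
      fix i assume "i < dim_vec v"
      then have "col (householder_mat n w) 0 $ i = (if i = 0 then 1 else 0) - (2 / (w \<bullet> w) * w $ 0) * w $ i"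
        using v n by (simp add: householder_mat_def algebra_simps)
      then show "col (householder_mat n w) 0 $ i = v $ i"
        using \<open>i < dim_vec v\<close> v unfolding c by (simp add: w_def)
    qed (use v in \<open>simp add: householder_mat_def\<close>)
    ultimately show ?thesis using householder_mat_orthonormal[OF w] by blast
  qed
qed

lemma conjugate_of_real_mat_mult_vec:
  assumes A: "A \<in> carrier_mat nr nc" and v: "v \<in> carrier_vec nc"
  shows "conjugate (map_mat complex_of_real A *\<^sub>v v) = map_mat complex_of_real A *\<^sub>v conjugate v"
proof (rule eq_vecI)
  fix i assume "i < dim_vec (map_mat complex_of_real A *\<^sub>v conjugate v)"
  then have i: "i < nr" using A by simp
  have "conjugate (row (map_mat complex_of_real A) i) = row (map_mat complex_of_real A) i"
    using A i by (intro eq_vecI) auto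
  then show "conjugate (map_mat complex_of_real A *\<^sub>v v) $ i = (map_mat complex_of_real A *\<^sub>v conjugate v) $ i"
    using conjugate_sprod_vec[of "row (map_mat complex_of_real A) i" nc v] A v i by simp
qed (use A in simp)

text \<open>For a complex eigenpair \<open>(a, v)\<close> of the real symmetric \<open>A\<close>,
  \<open>a (v \<bullet>c v) = (A v) \<bullet>c v = (A (conjugate v)) \<bullet> v = cnj a (v \<bullet>c v)\<close>, so \<open>a\<close> is real.\<close>
lemma sym_mat_has_eigenvalue:
  fixes A :: "real mat"
  assumes A: "A \<in> carrier_mat n n" and sym: "transpose_mat A = A" and n: "0 < n"
  shows "\<exists>l. eigenvalue A l"
proof -
  define Ac where "Ac = map_mat complex_of_real A"
  have Ac: "Ac \<in> carrier_mat n n" using A by (simp add: Ac_def)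
  have symAc: "transpose_mat Ac = Ac" using sym by (simp add: Ac_def map_mat_transpose)
  obtain a where "eigenvalue Ac a" using spectrum_non_empty[OF Ac n] by (auto simp: spectrum_def)
  then obtain v where v: "v \<in> carrier_vec n" and v0: "v \<noteq> 0\<^sub>v n" and Av: "Ac *\<^sub>v v = a \<cdot>\<^sub>v v"
    using Ac unfolding eigenvalue_def eigenvector_def by auto
  have conj_Av: "conjugate (Ac *\<^sub>v v) = Ac *\<^sub>v conjugate v"
    unfolding Ac_def by (rule conjugate_of_real_mat_mult_vec[OF A v])
  have "a * (v \<bullet>c v) = (Ac *\<^sub>v v) \<bullet>c v" using Av v by simp
  also have "\<dots> = conjugate v \<bullet> (Ac *\<^sub>v v)"
    by (rule comm_scalar_prod[of _ n]) (use Ac v in auto)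
  also have "\<dots> = (Ac *\<^sub>v conjugate v) \<bullet> v"
    using transpose_vec_mult_scalar[OF Ac v, of "conjugate v"] v symAc by simp
  also have "Ac *\<^sub>v conjugate v = conjugate a \<cdot>\<^sub>v conjugate v"
    by (simp flip: conj_Av add: Av conjugate_smult_vec)
  also have "(conjugate a \<cdot>\<^sub>v conjugate v) \<bullet> v = conjugate a * (v \<bullet>c v)"
    using v comm_scalar_prod[of "conjugate v" n v] by simp
  finally have "a = cnj a" using v v0 by simp
  then have "Im a = Im (cnj a)" by (rule arg_cong)
  then have "Im a = 0" by simp
  then have a: "a = complex_of_real (Re a)" by (simp add: complex_eq_iff)
  have "complex_of_real (poly (char_poly A) (Re a)) = poly (char_poly Ac) a"
    by (subst a) (simp add: Ac_def of_real_hom.char_poly_hom[OF A])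
  also have "\<dots> = 0" using \<open>eigenvalue Ac a\<close> eigenvalue_root_char_poly[OF Ac] by simp
  finally have "poly (char_poly A) (Re a) = 0" by simp
  then show ?thesis using eigenvalue_root_char_poly[OF A] by blast
qed

lemma sym_mat_has_unit_eigenvector:
  fixes A :: "real mat"
  assumes A: "A \<in> carrier_mat n n" and sym: "transpose_mat A = A" and n: "0 < n"
  shows "\<exists>l v. v \<in> carrier_vec n \<and> v \<bullet> v = 1 \<and> A *\<^sub>v v = l \<cdot>\<^sub>v v"
proof -
  obtain l u where u: "u \<in> carrier_vec n" and u0: "u \<noteq> 0\<^sub>v n" and Au: "A *\<^sub>v u = l \<cdot>\<^sub>v u"
    using sym_mat_has_eigenvalue[OF assms] A unfolding eigenvalue_def eigenvector_def by auto
  have "u \<bullet> u > 0" using conjugate_square_greater_0_vec[OF u] u0 by simp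
  define v where "v = (1 / sqrt (u \<bullet> u)) \<cdot>\<^sub>v u"
  have "v \<bullet> v = 1" using u \<open>u \<bullet> u > 0\<close> by (simp add: v_def)
  moreover have "A *\<^sub>v v = l \<cdot>\<^sub>v v"
    using A u Au by (simp add: v_def mult_mat_vec smult_smult_assoc mult.commute)
  moreover have "v \<in> carrier_vec n" using u by (simp add: v_def)
  ultimately show ?thesis by blast
qed

lemma sym_mat_first_col_four_block:
  fixes B :: "'a::comm_ring_1 mat"
  assumes B: "B \<in> carrier_mat (Suc m) (Suc m)" and sym: "transpose_mat B = B"
    and col0: "col B 0 = l \<cdot>\<^sub>v unit_vec (Suc m) 0"
  shows "\<exists>A'. A' \<in> carrier_mat m m \<and> transpose_mat A' = A' \<and>
    B = four_block_mat (mat 1 1 (\<lambda>_. l)) (0\<^sub>m 1 m) (0\<^sub>m m 1) A'"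
proof -
  have Bji: "B $$ (j, i) = B $$ (i, j)" if "i < Suc m" "j < Suc m" for i j
    using B that by (metis sym carrier_matD index_transpose_mat(1))
  have Bi0: "B $$ (i, 0) = (if i = 0 then l else 0)" if "i < Suc m" for i
    using arg_cong[OF col0, of "\<lambda>x. x $ i"] that B by simp
  define A' where "A' = mat m m (\<lambda>(i, j). B $$ (Suc i, Suc j))"
  have "transpose_mat A' = A'"
    using Bji by (intro eq_matI) (auto simp: A'_def)
  moreover have "B = four_block_mat (mat 1 1 (\<lambda>_. l)) (0\<^sub>m 1 m) (0\<^sub>m m 1) A'"
  proof (rule eq_matI)
    fix i j assume "i < dim_row (four_block_mat (mat 1 1 (\<lambda>_. l)) (0\<^sub>m 1 m) (0\<^sub>m m 1) A')"
      and "j < dim_col (four_block_mat (mat 1 1 (\<lambda>_. l)) (0\<^sub>m 1 m) (0\<^sub>m m 1) A')"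
    then have i: "i < Suc m" and j: "j < Suc m" by (simp_all add: A'_def)
    show "B $$ (i, j) = four_block_mat (mat 1 1 (\<lambda>_. l)) (0\<^sub>m 1 m) (0\<^sub>m m 1) A' $$ (i, j)"
    proof (cases "i = 0 \<or> j = 0")
      case True
      then show ?thesis using i j Bi0 Bji[of 0] by (auto simp: A'_def)
    next
      case False
      then obtain i' j' where "i = Suc i'" "j = Suc j'" by (meson not0_implies_Suc)
      then show ?thesis using i j by (simp add: A'_def)
    qed
  qed (use B in \<open>simp_all add: A'_def\<close>)
  moreover have "A' \<in> carrier_mat m m" by (simp add: A'_def)
  ultimately show ?thesis by blast
qed

lemma orthonormal_deflation:
  fixes A H :: "'a::field mat"
  assumes A: "A \<in> carrier_mat (Suc m) (Suc m)" and sym: "transpose_mat A = A"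
    and H: "orthonormal_mat (Suc m) H" and AH: "A *\<^sub>v col H 0 = l \<cdot>\<^sub>v col H 0"
  shows "\<exists>A'. A' \<in> carrier_mat m m \<and> transpose_mat A' = A' \<and>
    transpose_mat H * A * H = four_block_mat (mat 1 1 (\<lambda>_. l)) (0\<^sub>m 1 m) (0\<^sub>m m 1) A'"
proof (rule sym_mat_first_col_four_block)
  let ?N = "Suc m"
  have Hc: "H \<in> carrier_mat ?N ?N" and HH: "transpose_mat H * H = 1\<^sub>m ?N"
    using H by (auto simp: orthonormal_mat_def)
  show "transpose_mat H * A * H \<in> carrier_mat ?N ?N" using A Hc by simp
  have "transpose_mat (transpose_mat H * A * H) = transpose_mat H * transpose_mat (transpose_mat H * A)"
    by (rule transpose_mult) (use A Hc in auto)
  also have "transpose_mat (transpose_mat H * A) = A * H"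
    using A Hc sym by (subst transpose_mult[of _ ?N ?N]) auto
  finally show "transpose_mat (transpose_mat H * A * H) = transpose_mat H * A * H"
    using A Hc by simp
  have "col (transpose_mat H * A * H) 0 = transpose_mat H *\<^sub>v (A *\<^sub>v col H 0)"
    using A Hc col_mult2[of A ?N ?N H ?N 0]
    by (simp add: col_mult2[of "transpose_mat H" ?N ?N "A * H" ?N] del: col_mult)
  also have "\<dots> = l \<cdot>\<^sub>v (transpose_mat H *\<^sub>v col H 0)"
    using A Hc by (simp add: AH mult_mat_vec[of "transpose_mat H" ?N ?N "col H 0"] carrier_vecI)
  also have "transpose_mat H *\<^sub>v col H 0 = unit_vec ?N 0"
    using col_mult2[of "transpose_mat H" ?N ?N H ?N 0] Hc HH by simp
  finally show "col (transpose_mat H * A * H) 0 = l \<cdot>\<^sub>v unit_vec ?N 0" .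
qed

lemma four_block_mult_mat_diag:
  fixes A' Q' :: "'a::comm_ring_1 mat"
  assumes A': "A' \<in> carrier_mat m m" and Q': "Q' \<in> carrier_mat m m" and AQ': "A' * Q' = Q' * mat_diag m d'"
  shows "four_block_mat (mat 1 1 (\<lambda>_. l)) (0\<^sub>m 1 m) (0\<^sub>m m 1) A' * four_block_mat (1\<^sub>m 1) (0\<^sub>m 1 m) (0\<^sub>m m 1) Q'
    = four_block_mat (1\<^sub>m 1) (0\<^sub>m 1 m) (0\<^sub>m m 1) Q' * mat_diag (Suc m) (\<lambda>i. if i = 0 then l else d' (i - 1))"
proof -
  let ?L = "mat 1 1 (\<lambda>_. l)"
  have blocks: "1\<^sub>m 1 \<in> carrier_mat 1 1" "0\<^sub>m 1 m \<in> carrier_mat 1 m" "0\<^sub>m m 1 \<in> carrier_mat m 1"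
    "?L \<in> carrier_mat 1 1" by auto
  have "mat_diag (Suc m) (\<lambda>i. if i = 0 then l else d' (i - 1))
      = four_block_mat ?L (0\<^sub>m 1 m) (0\<^sub>m m 1) (mat_diag m d')"
    by (rule eq_matI) (auto simp: mat_diag_def)
  moreover have "four_block_mat ?L (0\<^sub>m 1 m) (0\<^sub>m m 1) A' * four_block_mat (1\<^sub>m 1) (0\<^sub>m 1 m) (0\<^sub>m m 1) Q'
      = four_block_mat ?L (0\<^sub>m 1 m) (0\<^sub>m m 1) (A' * Q')"
    using A' Q' by (subst mult_four_block_mat[OF blocks(4,2,3) A' blocks(1-3) Q']) auto
  moreover have "four_block_mat (1\<^sub>m 1) (0\<^sub>m 1 m) (0\<^sub>m m 1) Q' * four_block_mat ?L (0\<^sub>m 1 m) (0\<^sub>m m 1) (mat_diag m d')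
      = four_block_mat ?L (0\<^sub>m 1 m) (0\<^sub>m m 1) (Q' * mat_diag m d')"
    using Q' left_mult_zero_mat[OF mat_diag_dim, of 1 m d']
    by (subst mult_four_block_mat[OF blocks(1-3) Q' blocks(4,2,3) mat_diag_dim]) auto
  ultimately show ?thesis using AQ' by simp
qed

theorem sym_mat_orthonormal_diagonalization:
  fixes A :: "real mat"
  assumes "A \<in> carrier_mat n n" and "transpose_mat A = A"
  shows "\<exists>Q d. orthonormal_mat n Q \<and> A * Q = Q * mat_diag n d"
  using assms
proof (induction n arbitrary: A)
  case 0
  then show ?case
    by (intro exI[of _ "1\<^sub>m 0"] exI[of _ "\<lambda>_. 0"]) (auto simp: orthonormal_mat_def mat_diag_def intro!: eq_matI)
next
  case (Suc m)
  let ?N = "Suc m"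
  have A: "A \<in> carrier_mat ?N ?N" by fact
  obtain l v where "v \<in> carrier_vec ?N" "v \<bullet> v = 1" and Av: "A *\<^sub>v v = l \<cdot>\<^sub>v v"
    using sym_mat_has_unit_eigenvector[OF Suc.prems] by blast
  then obtain H where H: "orthonormal_mat ?N H" and "col H 0 = v"
    using orthonormal_mat_with_first_col by blast
  then obtain A' where A': "A' \<in> carrier_mat m m" "transpose_mat A' = A'"
    and blk: "transpose_mat H * A * H = four_block_mat (mat 1 1 (\<lambda>_. l)) (0\<^sub>m 1 m) (0\<^sub>m m 1) A'"
    using orthonormal_deflation[OF A Suc.prems(2) H] Av by blast
  obtain Q' d' where Q': "orthonormal_mat m Q'" and AQ': "A' * Q' = Q' * mat_diag m d'"
    using Suc.IH[OF A'] by blast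
  define E where "E = four_block_mat (1\<^sub>m 1) (0\<^sub>m 1 m) (0\<^sub>m m 1) Q'"
  define d where "d i = (if i = 0 then l else d' (i - 1))" for i
  have Hc: "H \<in> carrier_mat ?N ?N" using H by (simp add: orthonormal_mat_def)
  have E: "orthonormal_mat ?N E" unfolding E_def by (rule orthonormal_mat_four_block[OF Q'])
  then have Ec: "E \<in> carrier_mat ?N ?N" by (simp add: orthonormal_mat_def)
  have "H * (transpose_mat H * A * H) = (H * transpose_mat H) * A * H"
    using A Hc by (simp add: assoc_mult_mat[of _ ?N ?N _ ?N _ ?N])
  also have "\<dots> = A * H" using A by (simp add: orthonormal_mat_right_inverse[OF H])
  finally have AH: "A * H = H * (transpose_mat H * A * H)" ..
  have "A * (H * E) = (A * H) * E" using A Hc Ec by simp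
  also have "\<dots> = H * ((transpose_mat H * A * H) * E)"
    unfolding AH using A Hc Ec by (simp add: assoc_mult_mat[of _ ?N ?N _ ?N _ ?N])
  also have "(transpose_mat H * A * H) * E = E * mat_diag ?N d"
    unfolding blk E_def d_def using A' Q' AQ' by (intro four_block_mult_mat_diag) (auto simp: orthonormal_mat_def)
  finally have "A * (H * E) = (H * E) * mat_diag ?N d"
    using Hc Ec by (simp add: assoc_mult_mat[of _ ?N ?N _ ?N _ ?N])
  then show ?case using orthonormal_mat_mult[OF H E] by blast
qed

corollary sym_mat_orthonormal_eigenbasis:
  fixes A :: "real mat"
  assumes "A \<in> carrier_mat n n" and "transpose_mat A = A"
  shows "\<exists>Q d. orthonormal_mat n Q \<and> (\<forall>i<n. A *\<^sub>v col Q i = d i \<cdot>\<^sub>v col Q i)"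
proof -
  obtain Q d where Q: "orthonormal_mat n Q" and AQ: "A * Q = Q * mat_diag n d"
    using sym_mat_orthonormal_diagonalization[OF assms] by blast
  have "A *\<^sub>v col Q i = d i \<cdot>\<^sub>v col Q i" if "i < n" for i
  proof -
    have Qc: "Q \<in> carrier_mat n n" using Q by (simp add: orthonormal_mat_def)
    have "A *\<^sub>v col Q i = col (A * Q) i"
      using col_mult2[of A n n Q n i] assms Qc that by simp
    also have "\<dots> = d i \<cdot>\<^sub>v col Q i"
      unfolding AQ using Qc that by (intro eq_vecI) (auto simp: mat_diag_mult_right)
    finally show ?thesis .
  qed
  with Q show ?thesis by blast
qed

lemma smult_mult_mat_vec:
  assumes "A \<in> carrier_mat nr nc" and "v \<in> carrier_vec nc"
  shows "(c \<cdot>\<^sub>m A) *\<^sub>v v = c \<cdot>\<^sub>v (A *\<^sub>v v)"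
  using assms by (intro eq_vecI) (auto simp: scalar_prod_def sum_distrib_left ac_simps)

lemma cheb_mat_carrier: "X \<in> carrier_mat n n \<Longrightarrow> cheb_mat k X \<in> carrier_mat n n"
  by (induction k X rule: cheb_mat.induct) auto

lemma cheb_mat_eigenvector:
  fixes X :: "real mat"
  assumes X: "X \<in> carrier_mat n n" and x: "x \<in> carrier_vec n" and Xx: "X *\<^sub>v x = l \<cdot>\<^sub>v x"
  shows "cheb_mat k X *\<^sub>v x = cheb k l \<cdot>\<^sub>v x"
proof (induction k rule: induct_nat_012)
  case (ge2 k)
  have T1: "cheb_mat (Suc k) X \<in> carrier_mat n n" and T0: "cheb_mat k X \<in> carrier_mat n n"
    using X by (simp_all add: cheb_mat_carrier)
  have "cheb_mat (Suc (Suc k)) X *\<^sub>v x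
      = 2 \<cdot>\<^sub>v (X *\<^sub>v (cheb_mat (Suc k) X *\<^sub>v x)) - cheb_mat k X *\<^sub>v x"
    using X x T1 T0 by (simp add: minus_mult_distrib_mat_vec[of _ n n] smult_mult_mat_vec[of _ n n])
  also have "\<dots> = cheb (Suc (Suc k)) l \<cdot>\<^sub>v x"
    using ge2 X x Xx by (intro eq_vecI) (simp_all add: mult_mat_vec[of X n n] algebra_simps)
  finally show ?case .
qed (use X x Xx in simp_all)

lemma mtrace_mult_comm:
  fixes X Y :: "real mat"
  assumes X: "X \<in> carrier_mat n m" and Y: "Y \<in> carrier_mat m n"
  shows "mtrace (X * Y) = mtrace (Y * X)"
proof -
  have "mtrace (X * Y) = (\<Sum>i<n. \<Sum>k<m. X $$ (i, k) * Y $$ (k, i))"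
    unfolding mtrace_def using X Y by (simp add: scalar_prod_def atLeast0LessThan)
  also have "\<dots> = (\<Sum>k<m. \<Sum>i<n. Y $$ (k, i) * X $$ (i, k))"
    by (subst sum.swap) (simp add: mult.commute)
  also have "\<dots> = mtrace (Y * X)"
    unfolding mtrace_def using X Y by (simp add: scalar_prod_def atLeast0LessThan)
  finally show ?thesis .
qed

lemma mtrace_orthonormal_basis:
  fixes Q M :: "real mat"
  assumes Q: "orthonormal_mat n Q" and M: "M \<in> carrier_mat n n"
  shows "mtrace M = (\<Sum>i<n. col Q i \<bullet> (M *\<^sub>v col Q i))"
proof -
  have Qc: "Q \<in> carrier_mat n n" using Q by (simp add: orthonormal_mat_def)
  have "mtrace M = mtrace ((M * Q) * transpose_mat Q)"
    using M Qc orthonormal_mat_right_inverse[OF Q] by (simp add: assoc_mult_mat[of _ n n _ n _ n])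
  also have "\<dots> = mtrace (transpose_mat Q * (M * Q))"
    using M Qc by (intro mtrace_mult_comm) auto
  also have "\<dots> = (\<Sum>i<n. col Q i \<bullet> (M *\<^sub>v col Q i))"
    unfolding mtrace_def using M Qc by (simp add: col_mult2[of M n n Q n] del: col_mult)
  finally show ?thesis .
qed

lemma orthonormal_parseval:
  fixes Q :: "'a::field mat"
  assumes Q: "orthonormal_mat n Q" and z: "z \<in> carrier_vec n"
  shows "(\<Sum>i<n. (col Q i \<bullet> z)\<^sup>2) = z \<bullet> z"
proof -
  have Qc: "Q \<in> carrier_mat n n" using Q by (simp add: orthonormal_mat_def)
  define y where "y = transpose_mat Q *\<^sub>v z"
  have y: "y \<in> carrier_vec n" using Qc z by (simp add: y_def)
  have "(\<Sum>i<n. (col Q i \<bullet> z)\<^sup>2) = (transpose_mat Q *\<^sub>v z) \<bullet> y"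
    using Qc by (simp add: y_def scalar_prod_def atLeast0LessThan power2_eq_square)
  also have "\<dots> = z \<bullet> (Q *\<^sub>v y)" by (rule transpose_vec_mult_scalar[OF Qc y z])
  also have "Q *\<^sub>v y = z"
    using Qc z orthonormal_mat_right_inverse[OF Q]
    by (simp add: y_def assoc_mult_mat_vec[of Q n n "transpose_mat Q" n z, symmetric])
  finally show ?thesis .
qed

lemma mtrace_cheb_mat_eigenbasis:
  fixes X :: "real mat"
  assumes Q: "orthonormal_mat n Q" and X: "X \<in> carrier_mat n n"
    and eig: "\<And>i. i < n \<Longrightarrow> X *\<^sub>v col Q i = d i \<cdot>\<^sub>v col Q i"
  shows "mtrace (cheb_mat k X) = (\<Sum>i<n. cheb k (d i))"
proof -
  have Qc: "Q \<in> carrier_mat n n" using Q by (simp add: orthonormal_mat_def)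
  have "col Q i \<bullet> (cheb_mat k X *\<^sub>v col Q i) = cheb k (d i)" if "i < n" for i
    using cheb_mat_eigenvector[OF X _ eig[OF that]] orthonormal_mat_col_scalar_prod[OF Q that that]
      Qc that by simp
  then show ?thesis
    using mtrace_orthonormal_basis[OF Q cheb_mat_carrier[OF X]] by simp
qed

lemma vnorm_eq_L2_set: "vnorm v = L2_set (($) v) {..<dim_vec v}"
  by (simp add: vnorm_def L2_set_def)

lemma vnorm_nonneg: "0 \<le> vnorm v"
  by (simp add: vnorm_eq_L2_set)

lemma vnorm_eq_sqrt_scalar_prod: "vnorm v = sqrt (v \<bullet> v)"
  by (simp add: vnorm_def scalar_prod_def atLeast0LessThan power2_eq_square)

lemma vnorm_mult_mat_vec_le:
  assumes "v \<in> carrier_vec (dim_col M)"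
  shows "vnorm (M *\<^sub>v v) \<le> L2_set (\<lambda>i. L2_set (\<lambda>j. M $$ (i, j)) {..<dim_col M}) {..<dim_row M} * vnorm v"
proof -
  have "\<bar>(M *\<^sub>v v) $ i\<bar> \<le> L2_set (\<lambda>j. M $$ (i, j)) {..<dim_col M} * vnorm v"
    if "i < dim_row M" for i
  proof -
    have "\<bar>(M *\<^sub>v v) $ i\<bar> = \<bar>\<Sum>j<dim_col M. M $$ (i, j) * v $ j\<bar>"
      using assms that by (simp add: scalar_prod_def atLeast0LessThan)
    also have "\<dots> \<le> (\<Sum>j<dim_col M. \<bar>M $$ (i, j)\<bar> * \<bar>v $ j\<bar>)"
      by (simp add: sum_abs[THEN order_trans] abs_mult)
    also have "\<dots> \<le> L2_set (\<lambda>j. M $$ (i, j)) {..<dim_col M} * vnorm v"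
      using assms L2_set_mult_ineq by (simp add: vnorm_eq_L2_set)
    finally show ?thesis .
  qed
  then have "L2_set (\<lambda>i. \<bar>(M *\<^sub>v v) $ i\<bar>) {..<dim_row M}
      \<le> L2_set (\<lambda>i. L2_set (\<lambda>j. M $$ (i, j)) {..<dim_col M} * vnorm v) {..<dim_row M}"
    by (intro L2_set_mono) auto
  then have "vnorm (M *\<^sub>v v) \<le> L2_set (\<lambda>i. L2_set (\<lambda>j. M $$ (i, j)) {..<dim_col M} * vnorm v) {..<dim_row M}"
    by (simp add: vnorm_eq_L2_set L2_set_def)
  then show ?thesis by (simp add: L2_set_left_distrib[OF vnorm_nonneg])
qed

lemma spec_norm_set_bdd_above:
  "bdd_above (insert 0 {vnorm (M *\<^sub>v v) | v. v \<in> carrier_vec (dim_col M) \<and> vnorm v = 1})"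
  using vnorm_mult_mat_vec_le[of _ M]
  by (intro bdd_aboveI[of _ "L2_set (\<lambda>i. L2_set (\<lambda>j. M $$ (i, j)) {..<dim_col M}) {..<dim_row M}"])
    fastforce

lemma spec_norm_nonneg: "0 \<le> spec_norm M"
  unfolding spec_norm_def by (rule cSup_upper[OF _ spec_norm_set_bdd_above]) simp

lemma vnorm_mult_mat_vec_le_spec_norm:
  assumes "v \<in> carrier_vec (dim_col M)" and "vnorm v = 1"
  shows "vnorm (M *\<^sub>v v) \<le> spec_norm M"
  unfolding spec_norm_def by (rule cSup_upper[OF _ spec_norm_set_bdd_above]) (use assms in blast)

lemma sum_diff_eq_doubly_stochastic:
  fixes w :: "'i \<Rightarrow> 'j \<Rightarrow> 'a::comm_ring_1"
  assumes "\<And>i. i \<in> I \<Longrightarrow> (\<Sum>j\<in>J. w i j) = 1" and "\<And>j. j \<in> J \<Longrightarrow> (\<Sum>i\<in>I. w i j) = 1"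
  shows "(\<Sum>i\<in>I. f i) - (\<Sum>j\<in>J. g j) = (\<Sum>i\<in>I. \<Sum>j\<in>J. w i j * (f i - g j))"
proof -
  have "(\<Sum>i\<in>I. f i) = (\<Sum>i\<in>I. \<Sum>j\<in>J. w i j * f i)"
    using assms(1) by (simp flip: sum_distrib_right)
  moreover have "(\<Sum>j\<in>J. g j) = (\<Sum>i\<in>I. \<Sum>j\<in>J. w i j * g j)"
    using assms(2) by (subst sum.swap) (simp flip: sum_distrib_right)
  ultimately show ?thesis by (simp add: right_diff_distrib sum_subtractf)
qed

lemma scalar_prod_diff_eigenvectors:
  fixes X Y :: "'a::comm_ring_1 mat"
  assumes X: "X \<in> carrier_mat n n" and symX: "transpose_mat X = X" and Y: "Y \<in> carrier_mat n n"
    and x: "x \<in> carrier_vec n" and y: "y \<in> carrier_vec n"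
    and Xx: "X *\<^sub>v x = a \<cdot>\<^sub>v x" and Yy: "Y *\<^sub>v y = b \<cdot>\<^sub>v y"
  shows "x \<bullet> ((X - Y) *\<^sub>v y) = (a - b) * (x \<bullet> y)"
proof -
  have "x \<bullet> (X *\<^sub>v y) = (transpose_mat X *\<^sub>v x) \<bullet> y"
    by (rule transpose_vec_mult_scalar[OF X y x, symmetric])
  then have "x \<bullet> (X *\<^sub>v y) = a * (x \<bullet> y)"
    using smult_scalar_prod_distrib[OF x y] by (simp add: symX Xx)
  moreover have "x \<bullet> (Y *\<^sub>v y) = b * (x \<bullet> y)"
    using scalar_prod_smult_distrib[OF x y] by (simp add: Yy)
  ultimately show ?thesis
    using X Y x y by (simp add: minus_mult_distrib_mat_vec scalar_prod_minus_distrib[of _ n] algebra_simps)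
qed

lemma sum_weighted_cheb_diff_le:
  assumes a: "\<And>i. i \<in> I \<Longrightarrow> a i \<in> {-1..1}" and b: "b \<in> {-1..1}"
  shows "(\<Sum>i\<in>I. (w i)\<^sup>2 * \<bar>cheb k (a i) - cheb k b\<bar>)
    \<le> (real k)\<^sup>2 * (L2_set w I * L2_set (\<lambda>i. (a i - b) * w i) I)"
proof -
  have "(w i)\<^sup>2 * \<bar>cheb k (a i) - cheb k b\<bar> \<le> (real k)\<^sup>2 * (\<bar>w i\<bar> * \<bar>(a i - b) * w i\<bar>)" if "i \<in> I" for i
  proof -
    have "(w i)\<^sup>2 * \<bar>cheb k (a i) - cheb k b\<bar> \<le> (w i)\<^sup>2 * ((real k)\<^sup>2 * \<bar>a i - b\<bar>)"
      by (intro mult_left_mono cheb_lipschitz a b that) simp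
    also have "\<dots> = (real k)\<^sup>2 * (\<bar>w i\<bar> * \<bar>(a i - b) * w i\<bar>)"
      by (simp add: abs_mult power2_eq_square abs_mult_self_eq mult_ac)
    finally show ?thesis .
  qed
  then have "(\<Sum>i\<in>I. (w i)\<^sup>2 * \<bar>cheb k (a i) - cheb k b\<bar>)
      \<le> (\<Sum>i\<in>I. (real k)\<^sup>2 * (\<bar>w i\<bar> * \<bar>(a i - b) * w i\<bar>))"
    by (rule sum_mono)
  also have "\<dots> = (real k)\<^sup>2 * (\<Sum>i\<in>I. \<bar>w i\<bar> * \<bar>(a i - b) * w i\<bar>)"
    by (simp add: sum_distrib_left)
  also have "\<dots> \<le> (real k)\<^sup>2 * (L2_set w I * L2_set (\<lambda>i. (a i - b) * w i) I)"
    by (intro mult_left_mono L2_set_mult_ineq) simp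
  finally show ?thesis .
qed

lemma mtrace_cheb_mat_diff_le_eigenbasis:
  fixes X Y :: "real mat"
  assumes X: "X \<in> carrier_mat n n" and symX: "transpose_mat X = X" and Y: "Y \<in> carrier_mat n n"
    and Q: "orthonormal_mat n Q" and P: "orthonormal_mat n P"
    and eigX: "\<And>i. i < n \<Longrightarrow> X *\<^sub>v col Q i = \<alpha> i \<cdot>\<^sub>v col Q i"
    and eigY: "\<And>j. j < n \<Longrightarrow> Y *\<^sub>v col P j = \<beta> j \<cdot>\<^sub>v col P j"
    and \<alpha>: "\<And>i. i < n \<Longrightarrow> \<alpha> i \<in> {-1..1}" and \<beta>: "\<And>j. j < n \<Longrightarrow> \<beta> j \<in> {-1..1}"
  shows "\<bar>mtrace (cheb_mat k X) - mtrace (cheb_mat k Y)\<bar> \<le> real n * (real k)\<^sup>2 * spec_norm (X - Y)"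
proof -
  define W where "W i j = col Q i \<bullet> col P j" for i j
  have q: "col Q i \<in> carrier_vec n" and p: "col P j \<in> carrier_vec n" for i j
    using Q P by (auto simp: orthonormal_mat_def carrier_vecI)
  have rows: "(\<Sum>j<n. (W i j)\<^sup>2) = 1" if "i < n" for i
    using orthonormal_parseval[OF P q] orthonormal_mat_col_scalar_prod[OF Q that that]
    by (simp add: W_def comm_scalar_prod[OF q p])
  have cols: "(\<Sum>i<n. (W i j)\<^sup>2) = 1" if "j < n" for j
    using orthonormal_parseval[OF Q p] orthonormal_mat_col_scalar_prod[OF P that that]
    by (simp add: W_def)
  have col_bound: "L2_set (\<lambda>i. (\<alpha> i - \<beta> j) * W i j) {..<n} \<le> spec_norm (X - Y)" if "j < n" for j
  proof -
    have z: "(X - Y) *\<^sub>v col P j \<in> carrier_vec n"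
      using mult_mat_vec_carrier[OF minus_carrier_mat[OF Y] p] .
    have "L2_set (\<lambda>i. (\<alpha> i - \<beta> j) * W i j) {..<n} = vnorm ((X - Y) *\<^sub>v col P j)"
      using orthonormal_parseval[OF Q z]
        scalar_prod_diff_eigenvectors[OF X symX Y q p eigX eigY[OF that]]
      by (simp add: L2_set_def W_def vnorm_eq_sqrt_scalar_prod)
    also have "\<dots> \<le> spec_norm (X - Y)"
      using X Y p orthonormal_mat_col_scalar_prod[OF P that that]
      by (intro vnorm_mult_mat_vec_le_spec_norm) (auto simp: vnorm_eq_sqrt_scalar_prod)
    finally show ?thesis .
  qed
  have "mtrace (cheb_mat k X) - mtrace (cheb_mat k Y) = (\<Sum>i<n. cheb k (\<alpha> i)) - (\<Sum>j<n. cheb k (\<beta> j))"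
    using mtrace_cheb_mat_eigenbasis[OF Q X eigX] mtrace_cheb_mat_eigenbasis[OF P Y eigY] by simp
  also have "\<dots> = (\<Sum>i<n. \<Sum>j<n. (W i j)\<^sup>2 * (cheb k (\<alpha> i) - cheb k (\<beta> j)))"
    by (rule sum_diff_eq_doubly_stochastic) (simp_all add: rows cols)
  also have "\<bar>\<dots>\<bar> \<le> (\<Sum>j<n. \<Sum>i<n. (W i j)\<^sup>2 * \<bar>cheb k (\<alpha> i) - cheb k (\<beta> j)\<bar>)"
    by (subst sum.swap) (auto intro!: order_trans[OF sum_abs] sum_mono simp: abs_mult)
  also have "\<dots> \<le> (\<Sum>j<n. (real k)\<^sup>2 * spec_norm (X - Y))"
  proof (intro sum_mono)
    fix j assume j: "j \<in> {..<n}"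
    have "(\<Sum>i<n. (W i j)\<^sup>2 * \<bar>cheb k (\<alpha> i) - cheb k (\<beta> j)\<bar>)
        \<le> (real k)\<^sup>2 * (L2_set (\<lambda>i. W i j) {..<n} * L2_set (\<lambda>i. (\<alpha> i - \<beta> j) * W i j) {..<n})"
      using \<alpha> \<beta> j by (intro sum_weighted_cheb_diff_le) auto
    also have "L2_set (\<lambda>i. W i j) {..<n} = 1" using cols j by (simp add: L2_set_def)
    also have "(real k)\<^sup>2 * (1 * L2_set (\<lambda>i. (\<alpha> i - \<beta> j) * W i j) {..<n}) \<le> (real k)\<^sup>2 * spec_norm (X - Y)"
      using col_bound j by (simp add: mult_left_mono)
    finally show "(\<Sum>i<n. (W i j)\<^sup>2 * \<bar>cheb k (\<alpha> i) - cheb k (\<beta> j)\<bar>) \<le> (real k)\<^sup>2 * spec_norm (X - Y)" .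
  qed
  finally show ?thesis by simp
qed

lemma orthonormal_eigenvalue_in_spec:
  assumes "orthonormal_mat n Q" and "X \<in> carrier_mat n n" and "i < n"
    and "X *\<^sub>v col Q i = d \<cdot>\<^sub>v col Q i"
  shows "d \<in> spec X"
proof -
  have "col Q i \<noteq> 0\<^sub>v n"
    using orthonormal_mat_col_scalar_prod[OF assms(1,3,3)] by auto
  moreover have "col Q i \<in> carrier_vec n"
    using assms(1) by (auto simp: orthonormal_mat_def carrier_vecI)
  ultimately show ?thesis
    using assms(2,4) by (auto simp: spec_def eigenvalue_def eigenvector_def)
qed

theorem mtrace_cheb_mat_lipschitz:
  fixes X Y :: "real mat"
  assumes X: "X \<in> carrier_mat n n" "transpose_mat X = X" and Y: "Y \<in> carrier_mat n n" "transpose_mat Y = Y"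
    and specX: "spec X \<subseteq> {-1..1}" and specY: "spec Y \<subseteq> {-1..1}"
  shows "\<bar>mtrace (cheb_mat k X) - mtrace (cheb_mat k Y)\<bar> \<le> real n * (real k)\<^sup>2 * spec_norm (X - Y)"
proof -
  obtain Q \<alpha> where Q: "orthonormal_mat n Q" and eigX: "\<forall>i<n. X *\<^sub>v col Q i = \<alpha> i \<cdot>\<^sub>v col Q i"
    using sym_mat_orthonormal_eigenbasis[OF X] by blast
  obtain P \<beta> where P: "orthonormal_mat n P" and eigY: "\<forall>j<n. Y *\<^sub>v col P j = \<beta> j \<cdot>\<^sub>v col P j"
    using sym_mat_orthonormal_eigenbasis[OF Y] by blast
  have "\<alpha> i \<in> {-1..1}" if "i < n" for i
    using orthonormal_eigenvalue_in_spec[OF Q X(1) that] eigX that specX by blast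
  moreover have "\<beta> j \<in> {-1..1}" if "j < n" for j
    using orthonormal_eigenvalue_in_spec[OF P Y(1) that] eigY that specY by blast
  ultimately show ?thesis
    using eigX eigY by (intro mtrace_cheb_mat_diff_le_eigenbasis[OF X Y(1) Q P]) auto
qed

lemma normalize_mat_real_sym:
  assumes "real_sym n M"
  shows "real_sym n (normalize_mat eps M)"
proof -
  have M: "M \<in> carrier_mat n n" and sym: "transpose_mat M = M"
    using assms by (auto simp: real_sym_def)
  have "M $$ (j, i) = M $$ (i, j)" if "i < n" "j < n" for i j
    using sym M that by (metis carrier_matD index_transpose_mat(1))
  with M show ?thesis
    unfolding real_sym_def normalize_mat_def Let_def by (auto intro!: eq_matI)
qed

lemma L2_set_scale: "L2_set (\<lambda>k. c * f k) A = \<bar>c\<bar> * L2_set f A"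
  by (simp add: L2_set_def power_mult_distrib real_sqrt_mult flip: sum_distrib_left)

lemma L2_set_diff_commute: "L2_set (\<lambda>k. f k - g k) A = L2_set (\<lambda>k. g k - f k) A"
  by (simp add: L2_set_def power2_commute)

lemma L2_set_reverse_triangle_ineq: "\<bar>L2_set f A - L2_set g A\<bar> \<le> L2_set (\<lambda>k. f k - g k) A"
  using L2_set_triangle_ineq[of g "\<lambda>k. f k - g k" A] L2_set_triangle_ineq[of f "\<lambda>k. g k - f k" A]
    L2_set_diff_commute[of f g A]
  by simp

lemma L2_set_normalized_diff_le:
  assumes "0 < L2_set f A"
  shows "L2_set (\<lambda>k. f k / L2_set f A - g k / L2_set g A) A \<le> 2 * L2_set (\<lambda>k. f k - g k) A / L2_set f A"
proof -
  define nf ng where "nf = L2_set f A" and "ng = L2_set g A"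
  have nf: "0 < nf" using assms by (simp add: nf_def)
  have rescale: "\<bar>1 / nf - 1 / ng\<bar> * ng \<le> L2_set (\<lambda>k. f k - g k) A / nf"
  proof (cases "ng = 0")
    case False
    then have "0 < ng" using L2_set_nonneg[of g A] by (simp add: ng_def order_less_le)
    then have "\<bar>1 / nf - 1 / ng\<bar> * ng = \<bar>(ng - nf) / (nf * ng)\<bar> * ng"
      using nf by (simp add: diff_frac_eq)
    also have "\<dots> = \<bar>nf - ng\<bar> / nf"
      using nf \<open>0 < ng\<close> by (simp add: abs_minus_commute)
    also have "\<dots> \<le> L2_set (\<lambda>k. f k - g k) A / nf"
      using nf L2_set_reverse_triangle_ineq[of f A g] by (simp add: nf_def ng_def divide_right_mono)
    finally show ?thesis .
  qed (use nf in simp)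
  have "L2_set (\<lambda>k. f k / nf - g k / ng) A
      \<le> L2_set (\<lambda>k. 1 / nf * (f k - g k)) A + L2_set (\<lambda>k. (1 / nf - 1 / ng) * g k) A"
    using L2_set_triangle_ineq[of "\<lambda>k. 1 / nf * (f k - g k)" "\<lambda>k. (1 / nf - 1 / ng) * g k" A]
    by (simp add: divide_inverse algebra_simps)
  also have "\<dots> = L2_set (\<lambda>k. f k - g k) A / nf + \<bar>1 / nf - 1 / ng\<bar> * ng"
    using nf L2_set_scale[of "1 / nf" "\<lambda>k. f k - g k" A] L2_set_scale[of "1 / nf - 1 / ng" g A]
    by (simp add: ng_def)
  finally show ?thesis
    using rescale by (simp add: nf_def ng_def)
qed

lemma vnorm_vec: "vnorm (vec K f) = L2_set f {..<K}"
  unfolding vnorm_eq_L2_set by (intro L2_set_cong) auto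

lemma vnorm_normalized_diff_le:
  assumes "dim_vec w = dim_vec u" and "0 < vnorm u"
  shows "vnorm ((1 / vnorm u) \<cdot>\<^sub>v u - (1 / vnorm w) \<cdot>\<^sub>v w) \<le> 2 * vnorm (u - w) / vnorm u"
proof -
  let ?I = "{..<dim_vec u}"
  have "vnorm ((1 / vnorm u) \<cdot>\<^sub>v u - (1 / vnorm w) \<cdot>\<^sub>v w) = L2_set (\<lambda>k. u $ k / vnorm u - w $ k / vnorm w) ?I"
    unfolding vnorm_eq_L2_set[of "_ - _"] using assms(1) by (intro L2_set_cong) auto
  moreover have "vnorm (u - w) = L2_set (\<lambda>k. u $ k - w $ k) ?I"
    unfolding vnorm_eq_L2_set[of "u - w"] using assms(1) by (intro L2_set_cong) auto
  ultimately show ?thesis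
    using assms L2_set_normalized_diff_le[of "($) u" ?I "($) w"]
    by (simp add: vnorm_eq_L2_set[of u] vnorm_eq_L2_set[of w])
qed

lemma mtrace_one: "mtrace (1\<^sub>m n) = real n"
  by (simp add: mtrace_def)

lemma vnorm_s_vec_ge:
  assumes "M \<in> carrier_mat n n" and "1 \<le> K"
  shows "real n \<le> vnorm (s_vec eta eps K M)"
proof -
  have "s_coef eta eps M 0 = real n"
    using assms(1) by (simp add: s_coef_def normalize_mat_def Let_def mtrace_one)
  then show ?thesis
    using member_le_L2_set[of "{..<K}" 0 "s_coef eta eps M"] assms(2)
    by (simp add: s_vec_def vnorm_vec)
qed

lemma vnorm_s_vec_diff_le:
  assumes c: "0 \<le> c"
    and lip: "\<And>k. \<bar>mtrace (cheb_mat k (normalize_mat eps A)) - mtrace (cheb_mat k (normalize_mat eps B))\<bar>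
      \<le> c * (real k)\<^sup>2"
  shows "vnorm (s_vec eta eps K A - s_vec eta eps K B)
    \<le> c * sqrt (\<Sum>k<K. exp (- 2 * eta * real k) * (real k) ^ 4)"
proof -
  have "(s_coef eta eps A k - s_coef eta eps B k)\<^sup>2 \<le> c\<^sup>2 * (exp (- 2 * eta * real k) * (real k) ^ 4)"
    for k
  proof -
    have "(s_coef eta eps A k - s_coef eta eps B k)\<^sup>2
        = exp (- 2 * eta * real k) * (mtrace (cheb_mat k (normalize_mat eps A)) - mtrace (cheb_mat k (normalize_mat eps B)))\<^sup>2"
      by (simp add: s_coef_def power_mult_distrib right_diff_distrib[symmetric] flip: exp_of_nat_mult exp_add)
    also have "\<dots> \<le> exp (- 2 * eta * real k) * (c * (real k)\<^sup>2)\<^sup>2"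
    proof (intro mult_left_mono)
      have "\<bar>mtrace (cheb_mat k (normalize_mat eps A)) - mtrace (cheb_mat k (normalize_mat eps B))\<bar>
          \<le> \<bar>c * (real k)\<^sup>2\<bar>"
        using lip[of k] c by simp
      then show "(mtrace (cheb_mat k (normalize_mat eps A)) - mtrace (cheb_mat k (normalize_mat eps B)))\<^sup>2
          \<le> (c * (real k)\<^sup>2)\<^sup>2"
        by (simp only: abs_le_square_iff)
    qed simp
    finally show ?thesis by (simp add: power_mult_distrib algebra_simps)
  qed
  then have "vnorm (s_vec eta eps K A - s_vec eta eps K B)
      \<le> sqrt (\<Sum>k<K. c\<^sup>2 * (exp (- 2 * eta * real k) * (real k) ^ 4))"
    by (simp add: s_vec_def vnorm_def sum_mono)
  also have "\<dots> = c * sqrt (\<Sum>k<K. exp (- 2 * eta * real k) * (real k) ^ 4)"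
    using c by (simp add: real_sqrt_mult flip: sum_distrib_left)
  finally show ?thesis .
qed

lemma pow_div_le_exp:
  assumes "0 \<le> x" and "0 < m"
  shows "(x / real m) ^ m \<le> exp x"
proof -
  have "(x / real m) ^ m \<le> (1 + x / real m) ^ m"
    using assms by (intro power_mono) auto
  also have "\<dots> \<le> exp x"
    using assms by (intro exp_ge_one_plus_x_over_n_power_n) auto
  finally show ?thesis .
qed

lemma sum_exp_Suc_le:
  assumes "0 < eta"
  shows "(\<Sum>k<K. exp (- eta * real (Suc k))) \<le> 1 / eta"
proof -
  define q where "q = exp (- eta)"
  have q: "0 < q" "q < 1" using assms by (auto simp: q_def)
  have "exp (- eta * real (Suc k)) = q * q ^ k" for k
    unfolding q_def exp_of_nat_mult[symmetric] exp_add[symmetric] by (simp add: algebra_simps)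
  then have "(\<Sum>k<K. exp (- eta * real (Suc k))) = q * (\<Sum>k<K. q ^ k)"
    by (simp add: sum_distrib_left)
  also have "\<dots> = q * (1 - q ^ K) / (1 - q)"
    using q by (simp add: sum_gp_strict)
  also have "\<dots> \<le> q / (1 - q)"
    using q by (intro divide_right_mono) (auto simp: mult_left_le)
  also have "\<dots> = 1 / (exp eta - 1)"
    using assms by (simp add: q_def exp_minus field_simps)
  also have "\<dots> \<le> 1 / eta"
  proof -
    have "eta \<le> exp eta - 1" using exp_ge_add_one_self[of eta] by linarith
    then show ?thesis using assms by (intro divide_left_mono) auto
  qed
  finally show ?thesis .
qed

text \<open>The \<open>k = 0\<close> term vanishes, which is what makes the bound \<open>O(\<eta>\<^sup>-\<^sup>5)\<close> also for large \<open>\<eta>\<close>.\<close>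
lemma sum_exp_mult_pow4_le:
  assumes eta: "0 < eta"
  shows "(\<Sum>k<K. exp (- 2 * eta * real k) * real k ^ 4) \<le> 256 / eta ^ 5"
proof -
  let ?f = "\<lambda>k. exp (- 2 * eta * real k) * real k ^ 4"
  have "exp (- 2 * eta * x) * x ^ 4 \<le> 256 / eta ^ 4 * exp (- eta * x)" if "0 \<le> x" for x
  proof -
    have "(eta * x / real (4::nat)) ^ 4 \<le> exp (eta * x)"
      using eta that by (intro pow_div_le_exp) auto
    then have "x ^ 4 \<le> 256 / eta ^ 4 * exp (eta * x)"
      using eta by (simp add: power_divide power_mult_distrib field_simps)
    then have "exp (- 2 * eta * x) * x ^ 4 \<le> exp (- 2 * eta * x) * (256 / eta ^ 4 * exp (eta * x))"
      by (intro mult_left_mono) auto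
    also have "\<dots> = 256 / eta ^ 4 * exp (- eta * x)"
      by (simp add: field_simps flip: exp_add)
    finally show ?thesis .
  qed
  then have shifted: "?f (Suc k) \<le> 256 / eta ^ 4 * exp (- eta * real (Suc k))" for k
    by (metis of_nat_0_le_iff)
  have "(\<Sum>k<K. ?f k) \<le> (\<Sum>k<Suc K. ?f k)" by simp
  also have "\<dots> = (\<Sum>k<K. ?f (Suc k))" by (subst sum.lessThan_Suc_shift) simp
  also have "\<dots> \<le> (\<Sum>k<K. 256 / eta ^ 4 * exp (- eta * real (Suc k)))"
    by (intro sum_mono shifted)
  also have "\<dots> = 256 / eta ^ 4 * (\<Sum>k<K. exp (- eta * real (Suc k)))"
    by (simp only: sum_distrib_left)
  also have "\<dots> \<le> 256 / eta ^ 4 * (1 / eta)"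
    using eta by (intro mult_left_mono sum_exp_Suc_le) auto
  also have "\<dots> = 256 / eta ^ 5" by (simp add: eval_nat_numeral)
  finally show ?thesis .
qed

lemma sqrt_inverse_power5: "0 < x \<Longrightarrow> sqrt (1 / x ^ 5) = x powr (- 5 / 2)"
proof -
  assume x: "0 < x"
  have "sqrt (x ^ 5) = (x powr 5) powr (1 / 2)"
    using x by (simp add: powr_half_sqrt powr_numeral)
  also have "\<dots> = x powr (5 / 2)" by (simp add: powr_powr)
  finally show ?thesis by (simp add: real_sqrt_divide powr_minus_divide)
qed

lemma sqrt_sum_exp_mult_pow4_le:
  assumes eta: "0 < eta"
  shows "sqrt (\<Sum>k<K. exp (- 2 * eta * real k) * 2\<^sup>2 * real k ^ 4) \<le> 32 * eta powr (- 5 / 2)"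
proof -
  have "(\<Sum>k<K. exp (- 2 * eta * real k) * 2\<^sup>2 * real k ^ 4) = 4 * (\<Sum>k<K. exp (- 2 * eta * real k) * real k ^ 4)"
    by (simp add: sum_distrib_left algebra_simps)
  also have "\<dots> \<le> 32\<^sup>2 * (1 / eta ^ 5)"
    using sum_exp_mult_pow4_le[OF eta, of K] by simp
  finally have "sqrt (\<Sum>k<K. exp (- 2 * eta * real k) * 2\<^sup>2 * real k ^ 4) \<le> sqrt (32\<^sup>2 * (1 / eta ^ 5))"
    by (rule real_sqrt_le_mono)
  also have "\<dots> = sqrt (32\<^sup>2) * sqrt (1 / eta ^ 5)"
    by (rule real_sqrt_mult)
  also have "\<dots> = 32 * eta powr (- 5 / 2)"
    unfolding sqrt_inverse_power5[OF eta] by simp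
  finally show ?thesis .
qed

lemma vnorm_phi_diff_le:
  assumes A: "A \<in> carrier_mat n n" and K: "1 \<le> K" and s: "0 \<le> s"
    and lip: "\<And>k. \<bar>mtrace (cheb_mat k (normalize_mat eps A)) - mtrace (cheb_mat k (normalize_mat eps B))\<bar>
      \<le> real n * (real k)\<^sup>2 * s"
  shows "vnorm (phi eta eps K A - phi eta eps K B)
    \<le> real n / vnorm (s_vec eta eps K A) * sqrt (\<Sum>k<K. exp (- 2 * eta * real k) * 2\<^sup>2 * real k ^ 4) * s"
proof (cases "n = 0")
  case True
  then have "s_vec eta eps K A = s_vec eta eps K B"
    using lip by (simp add: s_vec_def s_coef_def)
  then have "phi eta eps K A = phi eta eps K B" by (simp add: phi_def)
  then show ?thesis using True by (simp add: vnorm_def)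
next
  case False
  let ?S = "\<Sum>k<K. exp (- 2 * eta * real k) * real k ^ 4"
  have pos: "0 < vnorm (s_vec eta eps K A)"
    using vnorm_s_vec_ge[OF A K, of eta eps] False by linarith
  have "vnorm (phi eta eps K A - phi eta eps K B)
      \<le> 2 * vnorm (s_vec eta eps K A - s_vec eta eps K B) / vnorm (s_vec eta eps K A)"
    unfolding phi_def using pos by (intro vnorm_normalized_diff_le) (auto simp: s_vec_def)
  also have "\<dots> \<le> 2 * (real n * s * sqrt ?S) / vnorm (s_vec eta eps K A)"
    using vnorm_s_vec_diff_le[of "real n * s" eps A B eta K] lip s pos
    by (intro divide_right_mono mult_left_mono) (auto simp: algebra_simps)
  also have "\<dots> = real n / vnorm (s_vec eta eps K A) * sqrt (\<Sum>k<K. exp (- 2 * eta * real k) * 2\<^sup>2 * real k ^ 4) * s"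
    by (simp add: real_sqrt_mult algebra_simps flip: sum_distrib_left)
  finally show ?thesis .
qed

lemma phi_lipschitz_constant_le:
  assumes A: "A \<in> carrier_mat n n" and K: "1 \<le> K" and eta: "0 < eta" and s: "0 \<le> s"
  shows "real n / vnorm (s_vec eta eps K A) * sqrt (\<Sum>k<K. exp (- 2 * eta * real k) * 2\<^sup>2 * real k ^ 4) * s
    \<le> 32 * real n * eta powr (- 5 / 2) * s"
proof -
  have "real n / vnorm (s_vec eta eps K A) \<le> real n"
  proof (cases "n = 0")
    case False
    then have "real n / vnorm (s_vec eta eps K A) \<le> 1"
      using vnorm_s_vec_ge[OF A K, of eta eps] by simp
    with False show ?thesis by linarith
  qed simp
  then have "real n / vnorm (s_vec eta eps K A) * sqrt (\<Sum>k<K. exp (- 2 * eta * real k) * 2\<^sup>2 * real k ^ 4)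
      \<le> real n * (32 * eta powr (- 5 / 2))"
    using sqrt_sum_exp_mult_pow4_le[OF eta] by (intro mult_mono) (auto intro!: sum_nonneg)
  then show ?thesis using s by (intro mult_right_mono) (simp_all add: algebra_simps)
qed

theorem theorem3:
  shows "\<exists>C_T \<le> (2::real). \<exists>c > (0::real).
    \<forall>(n::nat) (A::real mat) (B::real mat) (eta::real) (eps::real).
      real_sym n A \<and> real_sym n B \<and> eps > 0 \<and> eta > 0
      \<and> spec (normalize_mat eps A) \<subseteq> {-1..1} \<and> spec (normalize_mat eps B) \<subseteq> {-1..1}
      \<longrightarrow>
      (\<forall>k::nat.
         \<bar>mtrace (cheb_mat k (normalize_mat eps A)) - mtrace (cheb_mat k (normalize_mat eps B))\<bar>
           \<le> real n * C_T * (real k)\<^sup>2 * spec_norm (normalize_mat eps A - normalize_mat eps B))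
      \<and>
      (\<forall>K::nat. K \<ge> 1 \<longrightarrow>
         vnorm (phi eta eps K A - phi eta eps K B)
           \<le> real n / vnorm (s_vec eta eps K A)
             * sqrt (\<Sum>k<K. exp (- 2 * eta * real k) * C_T\<^sup>2 * (real k) ^ 4)
             * spec_norm (normalize_mat eps A - normalize_mat eps B)
         \<and>
         real n / vnorm (s_vec eta eps K A)
             * sqrt (\<Sum>k<K. exp (- 2 * eta * real k) * C_T\<^sup>2 * (real k) ^ 4)
             * spec_norm (normalize_mat eps A - normalize_mat eps B)
           \<le> c * real n * eta powr (-5/2) * spec_norm (normalize_mat eps A - normalize_mat eps B))"
proof (rule exI[of _ "2::real"], intro conjI exI[of _ "32::real"] allI impI; (elim conjE)?)
  show "(2::real) \<le> 2" and "(0::real) < 32" by simp_all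
next
  fix n :: nat and A B :: "real mat" and eta eps :: real
  assume A: "real_sym n A" and B: "real_sym n B" and "0 < eps" and eta: "0 < eta"
    and specA: "spec (normalize_mat eps A) \<subseteq> {-1..1}" and specB: "spec (normalize_mat eps B) \<subseteq> {-1..1}"
  let ?s = "spec_norm (normalize_mat eps A - normalize_mat eps B)"
  have s: "0 \<le> ?s" by (rule spec_norm_nonneg)
  have lip: "\<bar>mtrace (cheb_mat k (normalize_mat eps A)) - mtrace (cheb_mat k (normalize_mat eps B))\<bar>
      \<le> real n * (real k)\<^sup>2 * ?s" for k
    using normalize_mat_real_sym[OF A] normalize_mat_real_sym[OF B] specA specB
    by (intro mtrace_cheb_mat_lipschitz) (auto simp: real_sym_def)
  show "\<bar>mtrace (cheb_mat k (normalize_mat eps A)) - mtrace (cheb_mat k (normalize_mat eps B))\<bar>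
      \<le> real n * 2 * (real k)\<^sup>2 * ?s" for k
    using lip[of k] s by (smt (verit) mult_right_mono mult_nonneg_nonneg of_nat_0_le_iff zero_le_power2)
  show "vnorm (phi eta eps K A - phi eta eps K B)
      \<le> real n / vnorm (s_vec eta eps K A) * sqrt (\<Sum>k<K. exp (- 2 * eta * real k) * 2\<^sup>2 * real k ^ 4) * ?s"
    if "1 \<le> K" for K
    using A by (intro vnorm_phi_diff_le[OF _ that s lip]) (simp add: real_sym_def)
  show "real n / vnorm (s_vec eta eps K A) * sqrt (\<Sum>k<K. exp (- 2 * eta * real k) * 2\<^sup>2 * real k ^ 4) * ?s
      \<le> 32 * real n * eta powr (- 5 / 2) * ?s"
    if "1 \<le> K" for K
    using A by (intro phi_lipschitz_constant_le[OF _ that eta s]) (simp add: real_sym_def)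
qed

end
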